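(* Let $k\ge1$ be an integer and $\alpha>k$ real. Then $$\sum_{n=1}^\infty\frac{H_{n+\alpha}}{n\binom{n+k}{k}}=\sum_{j=1}^k(-1)^{j+1}\binom kj\Bigg\{H_\alpha^2+H_\alpha^{(2)}-H_{\alpha-j}^2-H_{\alpha-j}^{(2)}-(j-\alpha)\sum_{i=1}^j\frac{H_{\alpha+i-j}}{i(\alpha+i-j)}\Bigg\},$$ $$\sum_{n=1}^\infty\frac{H^{(2)}_{n+\alpha}}{n\binom{n+k}{k}}=\sum_{j=1}^k(-1)^{j+1}\binom kj\Bigg\{2H_\alpha^{(3)}+H_{\alpha-j}\zeta(2)+2H_\alpha H_\alpha^{(2)}-2H_{\alpha-j}^{(3)}-H_\alpha\zeta(2)-2H_{\alpha-j}H_{\alpha-j}^{(2)}-(j-\alpha)\sum_{i=1}^j\frac{H^{(2)}_{\alpha+i-j}}{i(\alpha+i-j)}-\sum_{i=1}^j\frac{H_{\alpha+i-j}}{(\alpha+i-j)^2}\Bigg\},$$ $$\sum_{n=1}^\infty\frac{H^2_{n+\alpha}}{n\binom{n+k}{k}}=\sum_{j=1}^k(-1)^{j+1}\binom kj\Bigg\{H_\alpha^3+H_\alpha H_\alpha^{(2)}+H_\alpha\zeta(2)-H_{\alpha-j}^3-H_{\alpha-j}H_{\alpha-j}^{(2)}-H_{\alpha-j}\zeta(2)+\sum_{i=1}^j\frac{H_{\alpha+i-j}}{(\alpha+i-j)^2}-(j-\alpha)\sum_{i=1}^j\frac{H^2_{\alpha+i-j}}{i(\alpha+i-j)}\Bi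gg\}.$$
   Context: Shifted harmonic numbers: for a real $\alpha$ that is not a negative integer, $H_\alpha := \sum_{k=1}^\infty\left(\frac1k-\frac1{k+\alpha}\right)$ and, for integers $m\ge 2$, $H_\alpha^{(m)} := \sum_{k=1}^\infty\left(\frac1{k^m}-\frac1{(k+\alpha)^m}\right)=\zeta(m)-\zeta(m,\alpha+1)$, where $\zeta$ is the Riemann zeta function and $\zeta(s,\alpha+1)=\sum_{n=1}^\infty (n+\alpha)^{-s}$ is the Hurwitz zeta function. Powers such as $H_\alpha^2$ mean $(H_\alpha)^2$. *)

theory Defs
  imports "HOL-Analysis.Analysis"
begin

definition Hs :: "real \<Rightarrow> real" where
  "Hs a = (\<Sum>k. 1 / real (Suc k) - 1 / (real (Suc k) + a))"

definition Hsm :: "nat \<Rightarrow> real \<Rightarrow> real" where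
  "Hsm m a = (\<Sum>k. 1 / real (Suc k) ^ m - 1 / (real (Suc k) + a) ^ m)"

definition zeta_nat :: "nat \<Rightarrow> real" where
  "zeta_nat m = (\<Sum>k. 1 / real (Suc k) ^ m)"

end

theory Submission
  imports Defs "HOL-Real_Asymp.Real_Asymp"
begin

(*
  Partial fractions write 1/(n C(n+k,k)) as the alternating combination of 1/n - 1/(n+j), j = 1..k,
  so each series reduces to sums of f(n+alpha) (1/n - 1/(n+j)) with f = H, H^(2) or H^2.
  Splitting 1/n - 1/(n+j) telescopically in j reduces these to the increment series
  sum_n (f(n+x) - f(n+x-1))/n at the points x = alpha+i-j, which are elementary for H and H^(2).
  For H^2 one needs sum_n H_(n+y)/(n(n+y)) = (H_y^2 + H_y^(2))/y.  The double series
  sum_(a,b>=1) y/(ab(a+b+y)) summed by rows gives y times the left-hand side, summed along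
  antidiagonals it gives sum_n 2y H_(n-1)/(n(n+y)); the difference of the two is a telescoping
  sum of (H_(n+y) - H_n)^2 plus H_y^(2).
*)

section \<open>Shifted harmonic numbers\<close>

lemma summable_inverse_Suc_power:
  assumes "m \<ge> 2" shows "summable (\<lambda>k. 1 / real (Suc k) ^ m)"
proof -
  have "summable (\<lambda>n. inverse (real n ^ m))" by (rule inverse_power_summable[OF assms])
  hence "summable (\<lambda>n. inverse (real (Suc n) ^ m))" by (subst summable_Suc_iff)
  thus ?thesis by (simp only: divide_inverse mult_1)
qed

lemma summable_inverse_shifted_power:
  assumes "x \<ge> 0" "m \<ge> 2" shows "summable (\<lambda>k. 1 / (real (Suc k) + x) ^ m)"
proof (rule summable_comparison_test)
  show "summable (\<lambda>k. 1 / real (Suc k) ^ m)" using summable_inverse_Suc_power assms by blast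
  have "1 / (real (Suc n) + x) ^ m \<le> 1 / real (Suc n) ^ m" for n
    using assms by (intro divide_left_mono power_mono) auto
  thus "\<exists>N. \<forall>n\<ge>N. norm (1 / (real (Suc n) + x) ^ m) \<le> 1 / real (Suc n) ^ m"
    using assms by auto
qed

lemma Hs_sums:
  assumes "x \<ge> 0" shows "(\<lambda>k. 1 / real (Suc k) - 1 / (real (Suc k) + x)) sums Hs x"
proof -
  have "summable (\<lambda>k. 1 / real (Suc k) - 1 / (real (Suc k) + x))"
  proof (rule summable_comparison_test)
    show "summable (\<lambda>k. x * (1 / real (Suc k) ^ 2))"
      using summable_inverse_Suc_power[of 2] by (intro summable_mult) auto
    have "1 / real (Suc n) - 1 / (real (Suc n) + x) = x / (real (Suc n) * (real (Suc n) + x))" for n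
      using assms by (simp add: field_simps)
    moreover have "x / (real (Suc n) * (real (Suc n) + x)) \<le> x * (1 / real (Suc n) ^ 2)" for n
      using assms by (simp add: power2_eq_square divide_left_mono mult_left_mono)
    ultimately show "\<exists>N. \<forall>n\<ge>N. norm (1 / real (Suc n) - 1 / (real (Suc n) + x)) \<le> x * (1 / real (Suc n) ^ 2)"
      using assms by auto
  qed
  thus ?thesis unfolding Hs_def by (rule summable_sums)
qed

lemma Hsm_one: "Hsm 1 = Hs"
  by (simp add: fun_eq_iff Hsm_def Hs_def)

lemma Hsm_sums:
  assumes "x \<ge> 0" "m \<ge> 1"
  shows "(\<lambda>k. 1 / real (Suc k) ^ m - 1 / (real (Suc k) + x) ^ m) sums Hsm m x"
proof (cases "m = 1")
  case True thus ?thesis using Hs_sums[OF assms(1)] unfolding True Hsm_one by simp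
next
  case False
  hence "summable (\<lambda>k. 1 / real (Suc k) ^ m - 1 / (real (Suc k) + x) ^ m)"
    using assms by (intro summable_diff summable_inverse_Suc_power summable_inverse_shifted_power) auto
  thus ?thesis unfolding Hsm_def by (rule summable_sums)
qed

lemma shifted_power_sums:
  assumes "x \<ge> 0" "m \<ge> 2"
  shows "(\<lambda>k. 1 / (real (Suc k) + x) ^ m) sums (zeta_nat m - Hsm m x)"
proof -
  have "(\<lambda>k. 1 / real (Suc k) ^ m) sums zeta_nat m" unfolding zeta_nat_def
    using summable_inverse_Suc_power[OF assms(2)] by (rule summable_sums)
  from sums_diff[OF this Hsm_sums[of x m]] show ?thesis
    using assms by simp
qed

lemma Hsm_plus_one:
  assumes "x \<ge> 0" "m \<ge> 1" shows "Hsm m (x + 1) = Hsm m x + 1 / (x + 1) ^ m"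
proof -
  have "(\<lambda>k. 1 / (real k + 1 + x)) \<longlonglongrightarrow> 0" by real_asymp
  hence "(\<lambda>k. (1 / (real k + 1 + x)) ^ m) \<longlonglongrightarrow> 0"
    using tendsto_power[of _ 0 _ m] assms by (simp add: zero_power)
  from telescope_sums'[OF this]
  have "(\<lambda>k. (1 / real (Suc k) ^ m - 1 / (real (Suc k) + (x + 1)) ^ m)
              - (1 / real (Suc k) ^ m - 1 / (real (Suc k) + x) ^ m)) sums (1 / (x + 1) ^ m)"
    by (simp add: algebra_simps power_one_over)
  moreover have "(\<lambda>k. (1 / real (Suc k) ^ m - 1 / (real (Suc k) + (x + 1)) ^ m)
              - (1 / real (Suc k) ^ m - 1 / (real (Suc k) + x) ^ m)) sums (Hsm m (x + 1) - Hsm m x)"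
    using assms by (intro sums_diff Hsm_sums) auto
  ultimately show ?thesis using sums_unique2 by fastforce
qed

lemma Hs_plus_one: "x \<ge> 0 \<Longrightarrow> Hs (x + 1) = Hs x + 1 / (x + 1)"
  using Hsm_plus_one[of x 1] unfolding Hsm_one by simp

lemma Hsm_minus_one: "x \<ge> 1 \<Longrightarrow> m \<ge> 1 \<Longrightarrow> Hsm m (x - 1) = Hsm m x - 1 / x ^ m"
  using Hsm_plus_one[of "x - 1" m] by simp

lemma Hs_minus_one: "x \<ge> 1 \<Longrightarrow> Hs (x - 1) = Hs x - 1 / x"
  using Hsm_minus_one[of x 1] unfolding Hsm_one by simp

lemma Hs_zero [simp]: "Hs 0 = 0"
  by (simp add: Hs_def)

lemma Hs_of_nat: "Hs (real n) = harm n"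
proof (induction n)
  case (Suc n)
  thus ?case using Hs_plus_one[of "real n"] by (simp add: harm_Suc divide_inverse add.commute)
qed (simp add: harm_def)

lemma Hs_mono:
  assumes "0 \<le> x" "x \<le> z" shows "Hs x \<le> Hs z"
proof -
  have "1 / real (Suc k) - 1 / (real (Suc k) + x) \<le> 1 / real (Suc k) - 1 / (real (Suc k) + z)" for k
    using assms by (simp add: divide_left_mono)
  thus ?thesis using sums_le[OF _ Hs_sums Hs_sums] assms by simp
qed

lemma Hs_nonneg: "x \<ge> 0 \<Longrightarrow> Hs x \<ge> 0"
  using Hs_mono[of 0 x] by simp

lemma harm_le_one_plus_ln: "n > 0 \<Longrightarrow> harm n \<le> 1 + ln (real n)"
  using euler_mascheroni_sequence_decreasing[of 1 n] by (simp add: harm_def)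

lemma Hs_le_one_plus_ln:
  assumes "x \<ge> 0" shows "Hs x \<le> 1 + ln (x + 1)"
proof -
  define n where "n = nat \<lceil>x\<rceil>"
  have n: "x \<le> real n" "real n < x + 1" unfolding n_def using assms by linarith+
  have "Hs x \<le> harm n" using Hs_mono[OF assms n(1)] by (simp add: Hs_of_nat)
  also have "harm n \<le> 1 + ln (x + 1)"
  proof (cases "n = 0")
    case False
    hence "ln (real n) \<le> ln (x + 1)" using n by (intro ln_mono) auto
    thus ?thesis using harm_le_one_plus_ln[of n] False by simp
  qed (use assms in \<open>simp add: harm_def\<close>)
  finally show ?thesis .
qed

lemma Hsm_nonneg:
  assumes "x \<ge> 0" "m \<ge> 1" shows "Hsm m x \<ge> 0"
proof -
  have "1 / (real (Suc k) + x) ^ m \<le> 1 / real (Suc k) ^ m" for k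
    using assms by (intro divide_left_mono power_mono) auto
  thus ?thesis using sums_le[OF _ sums_zero Hsm_sums[OF assms]] by simp
qed

lemma Hsm_le_zeta:
  assumes "x \<ge> 0" "m \<ge> 2" shows "Hsm m x \<le> zeta_nat m"
  using sums_le[OF _ sums_zero shifted_power_sums[OF assms]] assms by simp

section \<open>Series with shifted harmonic numbers\<close>

lemma sums_inverse_mult_shift:
  assumes "y > 0" shows "(\<lambda>n. 1 / (real (Suc n) * (real (Suc n) + y))) sums (Hs y / y)"
proof -
  have "(1 / N - 1 / (N + y)) / y = 1 / (N * (N + y))" if "N > 0" for N :: real
  proof -
    have "N \<noteq> 0" "N + y \<noteq> 0" using that assms by auto
    thus ?thesis using assms by (simp add: divide_simps)
  qed
  thus ?thesis using sums_divide[OF Hs_sums, of y y] assms by simp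
qed

lemma sums_inverse_mult_shift_squared:
  assumes "y > 0"
  shows "(\<lambda>n. 1 / (real (Suc n) * (real (Suc n) + y) ^ 2)) sums (Hs y / y ^ 2 - (zeta_nat 2 - Hsm 2 y) / y)"
proof -
  have "(\<lambda>n. 1 / (real (Suc n) * (real (Suc n) + y)) / y - 1 / (real (Suc n) + y) ^ 2 / y)
          sums (Hs y / y / y - (zeta_nat 2 - Hsm 2 y) / y)"
    using assms by (intro sums_diff sums_divide sums_inverse_mult_shift shifted_power_sums) auto
  moreover have "1 / (N * (N + y)) / y - 1 / (N + y) ^ 2 / y = 1 / (N * (N + y) ^ 2)" if "N > 0" for N :: real
  proof -
    have "N \<noteq> 0" "N + y \<noteq> 0" using that assms by auto
    thus ?thesis using assms by (simp add: divide_simps) (simp add: algebra_simps power2_eq_square)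
  qed
  ultimately show ?thesis by (simp add: power2_eq_square)
qed

lemma harm_add_minus_harm_tendsto_zero: "(\<lambda>n. harm (n + m) - harm n :: real) \<longlonglongrightarrow> 0"
proof -
  have "(\<lambda>n. (harm (n + m) - ln (real (n + m))) - (harm n - ln (real n))
            + (ln (real n + real m) - ln (real n))) \<longlonglongrightarrow> euler_mascheroni - euler_mascheroni + 0"
    by (intro tendsto_add tendsto_diff euler_mascheroni_LIMSEQ
        LIMSEQ_ignore_initial_segment[OF euler_mascheroni_LIMSEQ]) real_asymp
  thus ?thesis by simp
qed

lemma Hs_add_minus_Hs_tendsto_zero:
  assumes "y \<ge> 0" shows "(\<lambda>n. Hs (real n + y) - Hs (real n)) \<longlonglongrightarrow> 0"
proof (rule tendsto_sandwich)
  define m where "m = nat \<lceil>y\<rceil>"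
  have "y \<le> real m" unfolding m_def by linarith
  hence "Hs (real n + y) \<le> harm (n + m)" for n
    using Hs_mono[of "real n + y" "real (n + m)"] Hs_of_nat[of "n + m"] assms by simp
  thus "\<forall>\<^sub>F n in sequentially. Hs (real n + y) - Hs (real n) \<le> harm (n + m) - harm n"
    by (simp add: Hs_of_nat)
  show "\<forall>\<^sub>F n in sequentially. 0 \<le> Hs (real n + y) - Hs (real n)"
    using Hs_mono assms by simp
qed (simp_all add: harm_add_minus_harm_tendsto_zero)

lemma sums_Hs_difference_over_mult_shift:
  assumes "y > 0"
  shows "(\<lambda>n. 2 * y * (Hs (real (Suc n) + y) - Hs (real n)) / (real (Suc n) * (real (Suc n) + y)))
           sums (Hs y ^ 2 + Hsm 2 y)"
proof -
  define c where "c n = Hs (real n + y) - Hs (real n)" for n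
  have "(\<lambda>n. c n ^ 2) \<longlonglongrightarrow> 0"
    using tendsto_power[OF Hs_add_minus_Hs_tendsto_zero, of y 2] assms by (simp add: c_def)
  from sums_add[OF telescope_sums'[OF this] Hsm_sums[of y 2]]
  have "(\<lambda>n. c n ^ 2 - c (Suc n) ^ 2 + (1 / real (Suc n) ^ 2 - 1 / (real (Suc n) + y) ^ 2))
          sums (Hs y ^ 2 + Hsm 2 y)"
    using assms by (simp add: c_def)
  moreover have "c n ^ 2 - c (Suc n) ^ 2 + (1 / real (Suc n) ^ 2 - 1 / (real (Suc n) + y) ^ 2)
      = 2 * y * (Hs (real (Suc n) + y) - Hs (real n)) / (real (Suc n) * (real (Suc n) + y))" for n
  proof -
    define N where "N = real (Suc n)"
    have "Hs (real (Suc n) + y) = Hs (real n + y) + 1 / (N + y)"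
      using Hs_plus_one[of "real n + y"] assms by (simp add: N_def add_ac)
    moreover have "Hs (real (Suc n)) = Hs (real n) + 1 / N"
      using Hs_plus_one[of "real n"] by (simp add: N_def add_ac)
    ultimately have "c (Suc n) = c n + 1 / (N + y) - 1 / N"
      and "Hs (real (Suc n) + y) - Hs (real n) = c n + 1 / (N + y)"
      unfolding c_def by simp_all
    moreover have "C ^ 2 - (C + 1 / (N + y) - 1 / N) ^ 2 + (1 / N ^ 2 - 1 / (N + y) ^ 2)
        = 2 * y * (C + 1 / (N + y)) / (N * (N + y))" for C
      using assms by (simp add: N_def divide_simps) (simp add: algebra_simps power2_eq_square)
    ultimately show ?thesis by (simp add: N_def)
  qed
  ultimately show ?thesis by simp
qed

text \<open>The double series y/(ab(a+b+y)) over a, b \<ge> 1, re-indexed from 0.\<close>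

definition harmonic_kernel :: "real \<Rightarrow> nat \<times> nat \<Rightarrow> real" where
  "harmonic_kernel y = (\<lambda>(a, b). y / (real (Suc a) * real (Suc b) * (real a + real b + 2 + y)))"

lemma harmonic_kernel_nonneg: "y \<ge> 0 \<Longrightarrow> harmonic_kernel y p \<ge> 0"
  by (cases p) (simp add: harmonic_kernel_def)

lemma sum_harmonic_kernel_antidiagonal:
  "(\<Sum>i\<le>N. harmonic_kernel y (i, N - i)) = 2 * y * harm (Suc N) / ((real N + 2) * (real N + 2 + y))"
proof -
  have "harmonic_kernel y (i, N - i)
          = y / ((real N + 2) * (real N + 2 + y)) * (1 / real (Suc i) + 1 / real (Suc (N - i)))"
    if "i \<le> N" for i
  proof -
    have "real (N - i) = real N - real i" "real N + 1 - real i > 0" using that by auto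
    thus ?thesis by (simp add: harmonic_kernel_def divide_simps)
  qed
  hence "(\<Sum>i\<le>N. harmonic_kernel y (i, N - i))
      = (\<Sum>i\<le>N. y / ((real N + 2) * (real N + 2 + y)) * (1 / real (Suc i) + 1 / real (Suc (N - i))))"
    by (intro sum.cong) auto
  also have "\<dots> = y / ((real N + 2) * (real N + 2 + y))
                    * ((\<Sum>i\<le>N. 1 / real (Suc i)) + (\<Sum>i\<le>N. 1 / real (Suc (N - i))))"
    by (simp only: sum.distrib[symmetric] sum_distrib_left)
  also have "(\<Sum>i\<le>N. 1 / real (Suc (N - i))) = (\<Sum>i\<le>N. 1 / real (Suc i))"
    using sum.nat_diff_reindex[of "\<lambda>i. 1 / real (Suc i)" "Suc N"] by (simp add: lessThan_Suc_atMost)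
  also have "(\<Sum>i\<le>N. 1 / real (Suc i)) = harm (Suc N)"
    by (simp add: harm_altdef lessThan_Suc_atMost divide_inverse)
  finally show ?thesis by simp
qed

lemma summable_harm_over_quadratic:
  assumes "y \<ge> 0" shows "summable (\<lambda>N. harm (Suc N) / ((real N + 2) * (real N + 2 + y)))"
proof -
  have "harm (Suc N) / ((real N + 2) * (real N + 2 + y)) \<le> (1 + ln (real N + 1)) / (real N + 1) ^ 2" for N
    using harm_le_one_plus_ln[of "Suc N"] assms
    by (intro frac_le) (auto simp: power2_eq_square add.commute intro: mult_mono)
  hence "(\<lambda>N. harm (Suc N) / ((real N + 2) * (real N + 2 + y))) \<in> O(\<lambda>N. (1 + ln (real N + 1)) / (real N + 1) ^ 2)"
    using assms by (intro bigoI[of _ 1]) (auto simp: harm_nonneg)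
  also have "(\<lambda>N. (1 + ln (real N + 1)) / (real N + 1) ^ 2) \<in> O(\<lambda>N. real N powr (-3/2))"
    by real_asymp
  finally show ?thesis
    by (rule summable_comparison_test_bigo[rotated]) (simp add: summable_real_powr_iff)
qed

lemma has_sum_harmonic_kernel:
  assumes "y \<ge> 0"
  shows "(harmonic_kernel y has_sum (\<Sum>N. 2 * y * harm (Suc N) / ((real N + 2) * (real N + 2 + y)))) UNIV"
proof -
  define w where "w N = 2 * y * harm (Suc N) / ((real N + 2) * (real N + 2 + y))" for N
  define F where "F = (\<lambda>(N, i). harmonic_kernel y (i, N - i))"
  have diagonals: "((\<lambda>i. F (N, i)) has_sum w N) {..N}" for N
    using has_sum_finite[of "{..N}" "\<lambda>i. F (N, i)"]
    by (simp add: F_def w_def sum_harmonic_kernel_antidiagonal)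
  have "summable w"
    using summable_mult[OF summable_harm_over_quadratic[OF assms], of "2 * y"]
    by (simp add: w_def[abs_def] mult_ac)
  hence w_has_sum: "(w has_sum (\<Sum>N. w N)) UNIV"
    using assms by (intro sums_nonneg_imp_has_sum summable_sums) (auto simp: w_def harm_nonneg)
  have "F summable_on (SIGMA N:UNIV. {..N})"
    using diagonals w_has_sum assms
    by (intro summable_on_SigmaI[OF diagonals]) (auto simp: F_def harmonic_kernel_nonneg has_sum_imp_summable)
  hence "(F has_sum (\<Sum>N. w N)) (SIGMA N:UNIV. {..N})"
    by (rule has_sum_SigmaI[OF diagonals w_has_sum])
  moreover define h where "h = (\<lambda>(N::nat, i::nat). (i, N - i))"
  have "bij_betw h (SIGMA N:UNIV. {..N}) UNIV"
    by (rule bij_betw_byWitness[where f' = "\<lambda>(a, b). (a + b, a)"]) (auto simp: h_def)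
  ultimately show ?thesis
    using has_sum_reindex_bij_betw[of h _ _ "harmonic_kernel y"]
    by (simp add: F_def w_def h_def case_prod_unfold)
qed

lemma has_sum_harmonic_kernel_row:
  assumes "y \<ge> 0"
  shows "((\<lambda>b. harmonic_kernel y (a, b)) has_sum (y * Hs (real (Suc a) + y) / (real (Suc a) * (real (Suc a) + y)))) UNIV"
proof -
  define x where "x = real (Suc a) + y"
  have x: "x > 0" using assms by (simp add: x_def)
  have "y / (real (Suc a) * x) * (1 / real (Suc b) - 1 / (real (Suc b) + x)) = harmonic_kernel y (a, b)" for b
  proof -
    have "real a + real b + 2 + y = real (Suc b) + x" by (simp add: x_def)
    thus ?thesis using x by (simp add: harmonic_kernel_def divide_simps)
  qed
  with sums_mult[OF Hs_sums, of x "y / (real (Suc a) * x)"]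
  have "(\<lambda>b. harmonic_kernel y (a, b)) sums (y / (real (Suc a) * x) * Hs x)"
    using x by simp
  thus ?thesis using assms
    by (intro sums_nonneg_imp_has_sum) (simp_all add: x_def harmonic_kernel_nonneg)
qed

lemma sums_Hs_over_mult_shift:
  assumes "y > 0"
  shows "(\<lambda>n. Hs (real (Suc n) + y) / (real (Suc n) * (real (Suc n) + y))) sums ((Hs y ^ 2 + Hsm 2 y) / y)"
proof -
  define S where "S = (\<Sum>N. 2 * y * harm (Suc N) / ((real N + 2) * (real N + 2 + y)))"
  have "(harmonic_kernel y has_sum S) (UNIV \<times> UNIV)"
    using has_sum_harmonic_kernel[of y] assms by (simp add: S_def)
  from has_sum_Sigma'[OF this has_sum_harmonic_kernel_row]
  have rows: "(\<lambda>n. y * Hs (real (Suc n) + y) / (real (Suc n) * (real (Suc n) + y))) sums S"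
    using assms by (intro has_sum_imp_sums) simp
  have "summable (\<lambda>N. 2 * y * (harm (Suc N) / ((real N + 2) * (real N + 2 + y))))"
    using assms by (intro summable_mult summable_harm_over_quadratic) simp
  hence "(\<lambda>N. 2 * y * harm (Suc N) / ((real N + 2) * (real N + 2 + y))) sums S"
    unfolding S_def by (simp add: summable_sums)
  moreover have "2 * y * Hs (real (Suc N)) / (real (Suc (Suc N)) * (real (Suc (Suc N)) + y))
      = 2 * y * harm (Suc N) / ((real N + 2) * (real N + 2 + y))" for N
    using Hs_of_nat[of "Suc N"] by (simp add: add_ac)
  ultimately have "(\<lambda>N. 2 * y * Hs (real (Suc N)) / (real (Suc (Suc N)) * (real (Suc (Suc N)) + y))) sums S"
    by simp
  hence diagonals: "(\<lambda>n. 2 * y * Hs (real n) / (real (Suc n) * (real (Suc n) + y))) sums S"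
    using sums_Suc_iff[of "\<lambda>n. 2 * y * Hs (real n) / (real (Suc n) * (real (Suc n) + y))" S] by simp
  have "(\<lambda>n. 2 * (y * Hs (real (Suc n) + y) / (real (Suc n) * (real (Suc n) + y)))
            - 2 * y * Hs (real n) / (real (Suc n) * (real (Suc n) + y))) sums (2 * S - S)"
    by (intro sums_diff sums_mult rows diagonals)
  with sums_Hs_difference_over_mult_shift[OF assms] have "S = Hs y ^ 2 + Hsm 2 y"
    by (simp add: sums_iff diff_divide_distrib right_diff_distrib mult.assoc)
  with sums_divide[OF rows, of y] show ?thesis
    using assms by simp
qed

lemma sums_Hs_increment:
  assumes "x > 0"
  shows "(\<lambda>n. (Hs (real (Suc n) + x) - Hs (real n + x)) / real (Suc n)) sums (Hs x / x)"
proof -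
  have "(Hs (real (Suc n) + x) - Hs (real n + x)) / real (Suc n) = 1 / (real (Suc n) * (real (Suc n) + x))" for n
    using Hs_plus_one[of "real n + x"] assms by (simp add: add_ac)
  thus ?thesis using sums_inverse_mult_shift[OF assms] by simp
qed

lemma sums_Hsm2_increment:
  assumes "x > 0"
  shows "(\<lambda>n. (Hsm 2 (real (Suc n) + x) - Hsm 2 (real n + x)) / real (Suc n))
           sums (Hs x / x ^ 2 - (zeta_nat 2 - Hsm 2 x) / x)"
proof -
  have "(Hsm 2 (real (Suc n) + x) - Hsm 2 (real n + x)) / real (Suc n) = 1 / (real (Suc n) * (real (Suc n) + x) ^ 2)" for n
    using Hsm_plus_one[of "real n + x" 2] assms by (simp add: add_ac)
  thus ?thesis using sums_inverse_mult_shift_squared[OF assms] by simp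
qed

lemma sums_Hs_squared_increment:
  assumes "x > 0"
  shows "(\<lambda>n. (Hs (real (Suc n) + x) ^ 2 - Hs (real n + x) ^ 2) / real (Suc n))
           sums (2 * ((Hs x ^ 2 + Hsm 2 x) / x) - (Hs x / x ^ 2 - (zeta_nat 2 - Hsm 2 x) / x))"
proof -
  have "(Hs (real (Suc n) + x) ^ 2 - Hs (real n + x) ^ 2) / real (Suc n)
      = 2 * (Hs (real (Suc n) + x) / (real (Suc n) * (real (Suc n) + x)))
        - 1 / (real (Suc n) * (real (Suc n) + x) ^ 2)" for n
  proof -
    define N where "N = real (Suc n)"
    have N: "N \<noteq> 0" "N + x \<noteq> 0" using assms by (auto simp: N_def)
    have Hs_n: "Hs (real n + x) = Hs (N + x) - 1 / (N + x)"
      using Hs_plus_one[of "real n + x"] assms by (simp add: N_def add_ac)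
    show ?thesis unfolding N_def[symmetric] Hs_n using N
      by (simp add: divide_simps power2_eq_square) (simp add: algebra_simps)
  qed
  moreover have "(\<lambda>n. 2 * (Hs (real (Suc n) + x) / (real (Suc n) * (real (Suc n) + x)))
                      - 1 / (real (Suc n) * (real (Suc n) + x) ^ 2))
      sums (2 * ((Hs x ^ 2 + Hsm 2 x) / x) - (Hs x / x ^ 2 - (zeta_nat 2 - Hsm 2 x) / x))"
    using assms by (intro sums_diff sums_mult sums_Hs_over_mult_shift sums_inverse_mult_shift_squared)
  ultimately show ?thesis by simp
qed

lemma Hs_shift_over_tendsto_zero:
  assumes "b \<ge> 0" shows "(\<lambda>n. Hs (real n + b) / real n) \<longlonglongrightarrow> 0"
proof (rule tendsto_sandwich)
  show "\<forall>\<^sub>F n in sequentially. 0 \<le> Hs (real n + b) / real n"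
    using assms by (simp add: Hs_nonneg)
  show "\<forall>\<^sub>F n in sequentially. Hs (real n + b) / real n \<le> (1 + ln (real n + b + 1)) / real n"
    using assms by (intro always_eventually allI divide_right_mono Hs_le_one_plus_ln) auto
  show "(\<lambda>n. (1 + ln (real n + b + 1)) / real n) \<longlonglongrightarrow> 0"
    using assms by real_asymp
qed simp

lemma Hs_squared_shift_over_tendsto_zero:
  assumes "b \<ge> 0" shows "(\<lambda>n. Hs (real n + b) ^ 2 / real n) \<longlonglongrightarrow> 0"
proof (rule tendsto_sandwich)
  show "\<forall>\<^sub>F n in sequentially. 0 \<le> Hs (real n + b) ^ 2 / real n"
    by simp
  show "\<forall>\<^sub>F n in sequentially. Hs (real n + b) ^ 2 / real n \<le> (1 + ln (real n + b + 1)) ^ 2 / real n"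
    using assms
    by (intro always_eventually allI divide_right_mono power_mono Hs_le_one_plus_ln Hs_nonneg) auto
  show "(\<lambda>n. (1 + ln (real n + b + 1)) ^ 2 / real n) \<longlonglongrightarrow> 0"
    using assms by real_asymp
qed simp

lemma Hsm_shift_over_tendsto_zero:
  assumes "b \<ge> 0" "m \<ge> 2" shows "(\<lambda>n. Hsm m (real n + b) / real n) \<longlonglongrightarrow> 0"
proof (rule tendsto_sandwich)
  show "\<forall>\<^sub>F n in sequentially. 0 \<le> Hsm m (real n + b) / real n"
    using assms by (simp add: Hsm_nonneg)
  show "\<forall>\<^sub>F n in sequentially. Hsm m (real n + b) / real n \<le> zeta_nat m / real n"
    using assms by (intro always_eventually allI divide_right_mono Hsm_le_zeta) auto
  show "(\<lambda>n. zeta_nat m / real n) \<longlonglongrightarrow> 0"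
    by real_asymp
qed simp

section \<open>Partial fractions and telescoping in the shift\<close>

lemma sum_alternating_binomial_over_shift_Suc:
  fixes x :: real
  shows "(\<Sum>j\<le>Suc k. (-1)^j * real (Suc k choose j) / (x + real j))
       = (\<Sum>j\<le>k. (-1)^j * real (k choose j) / (x + real j)) - (\<Sum>j\<le>k. (-1)^j * real (k choose j) / (x + 1 + real j))"
proof -
  define b where "b j = (-1)^j * real (k choose j) / (x + real j)" for j
  have "(\<Sum>j\<le>Suc k. (-1)^j * real (Suc k choose j) / (x + real j))
      = 1 / x + (\<Sum>i\<le>k. (-1)^(Suc i) * real (Suc k choose Suc i) / (x + real (Suc i)))"
    by (subst sum.atMost_Suc_shift) simp
  also have "(\<Sum>i\<le>k. (-1)^(Suc i) * real (Suc k choose Suc i) / (x + real (Suc i)))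
      = - (\<Sum>i\<le>k. (-1)^i * real (k choose i) / (x + 1 + real i)) + (\<Sum>i\<le>k. b (Suc i))"
    by (simp add: b_def sum.distrib[symmetric] sum_negf[symmetric])
       (rule sum.cong, simp_all add: add_divide_distrib add_ac ring_distribs)
  also have "(\<Sum>i\<le>k. b (Suc i)) = (\<Sum>i\<le>Suc k. b i) - b 0"
    using sum.atMost_Suc_shift[of b k] by simp
  also have "(\<Sum>i\<le>Suc k. b i) = (\<Sum>i\<le>k. b i)" by (simp add: b_def)
  finally show ?thesis by (simp add: b_def)
qed

lemma sum_alternating_binomial_over_shift:
  fixes x :: real
  assumes "x > 0"
  shows "(\<Sum>j\<le>k. (-1)^j * real (k choose j) / (x + real j)) = fact k / pochhammer x (Suc k)"
  using assms
proof (induction k arbitrary: x)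
  case (Suc k)
  have "(\<Sum>j\<le>Suc k. (-1)^j * real (Suc k choose j) / (x + real j))
      = fact k / pochhammer x (Suc k) - fact k / pochhammer (x + 1) (Suc k)"
    using Suc.prems
    unfolding sum_alternating_binomial_over_shift_Suc by (simp add: Suc.IH)
  also have "\<dots> = fact (Suc k) / pochhammer x (Suc (Suc k))"
  proof -
    define Q where "Q = pochhammer (x + 1) k"
    have "Q > 0" unfolding Q_def using Suc.prems by (intro pochhammer_pos) simp
    moreover have "pochhammer x (Suc k) = x * Q" by (simp add: Q_def pochhammer_rec)
    moreover have "pochhammer (x + 1) (Suc k) = Q * (x + 1 + real k)" by (simp add: Q_def pochhammer_Suc)
    moreover have "pochhammer x (Suc (Suc k)) = x * (Q * (x + 1 + real k))"
      by (simp only: pochhammer_rec[of x "Suc k"] \<open>pochhammer (x + 1) (Suc k) = Q * (x + 1 + real k)\<close>)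
    ultimately show ?thesis using Suc.prems by (simp add: divide_simps) (simp add: algebra_simps)
  qed
  finally show ?case .
qed simp

lemma inverse_mult_binomial_eq_sum:
  assumes "k \<ge> 1"
  shows "1 / (real (Suc n) * real ((Suc n + k) choose k))
       = (\<Sum>j=1..k. (-1) ^ (j+1) * real (k choose j) * (1 / real (Suc n) - 1 / (real (Suc n) + real j)))"
proof -
  define N where "N = real (Suc n)"
  have "(\<Sum>j=1..k. (-1) ^ (j+1) * real (k choose j) * (1 / N - 1 / (N + real j)))
      = (\<Sum>j\<le>k. (-1) ^ (j+1) * real (k choose j) * (1 / N - 1 / (N + real j)))"
    by (rule sum.mono_neutral_left) auto
  also have "\<dots> = (\<Sum>j\<le>k. (-1)^j * real (k choose j) / (N + real j)) - (\<Sum>j\<le>k. (-1)^j * real (k choose j)) / N"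
    by (simp add: sum_subtractf sum_divide_distrib algebra_simps)
  also have "(\<Sum>j\<le>k. (-1)^j * real (k choose j)) = 0"
    using assms by (intro choose_alternating_sum) simp
  also have "(\<Sum>j\<le>k. (-1)^j * real (k choose j) / (N + real j)) = fact k / pochhammer N (Suc k)"
    by (rule sum_alternating_binomial_over_shift) (simp add: N_def)
  also have "pochhammer N (Suc k) = N * (real ((Suc n + k) choose k) * fact k)"
    by (simp add: pochhammer_rec binomial_gbinomial gbinomial_pochhammer' N_def add_ac)
  finally show ?thesis by (simp add: N_def)
qed

lemma sums_over_binomial:
  fixes f :: "nat \<Rightarrow> real"
  assumes "k \<ge> 1"
    and "\<And>j. j \<in> {1..k} \<Longrightarrow> (\<lambda>n. f n * (1 / real (Suc n) - 1 / (real (Suc n) + real j))) sums V j"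
  shows "(\<lambda>n. f n / (real (Suc n) * real ((Suc n + k) choose k)))
           sums (\<Sum>j=1..k. (-1) ^ (j+1) * real (k choose j) * V j)"
proof -
  have "(\<lambda>n. \<Sum>j=1..k. (-1) ^ (j+1) * real (k choose j) * (f n * (1 / real (Suc n) - 1 / (real (Suc n) + real j))))
      sums (\<Sum>j=1..k. (-1) ^ (j+1) * real (k choose j) * V j)"
    using assms(2) by (intro sums_sum sums_mult)
  moreover have "(\<Sum>j=1..k. (-1) ^ (j+1) * real (k choose j) * (f n * (1 / real (Suc n) - 1 / (real (Suc n) + real j))))
      = f n / (real (Suc n) * real ((Suc n + k) choose k))" for n
  proof -
    have "f n / (real (Suc n) * real ((Suc n + k) choose k))
        = f n * (1 / (real (Suc n) * real ((Suc n + k) choose k)))" by simp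
    also have "\<dots> = f n * (\<Sum>j=1..k. (-1) ^ (j+1) * real (k choose j) * (1 / real (Suc n) - 1 / (real (Suc n) + real j)))"
      by (simp only: inverse_mult_binomial_eq_sum[OF assms(1)])
    also have "\<dots> = (\<Sum>j=1..k. (-1) ^ (j+1) * real (k choose j) * (f n * (1 / real (Suc n) - 1 / (real (Suc n) + real j))))"
      by (simp add: sum_distrib_left mult_ac)
    finally show ?thesis by (rule sym)
  qed
  ultimately show ?thesis by simp
qed

lemma sum_telescope_real:
  "(\<Sum>i=1..j. G (real i) - G (real i - 1)) = G (real j) - (G 0 :: real)"
  by (induction j) (simp_all add: sum.atLeast1_atMost_eq)

lemma sums_diff_shift:
  fixes e :: "nat \<Rightarrow> real"
  assumes "e \<longlonglongrightarrow> 0"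
  shows "(\<lambda>n. e (Suc n) - e (Suc n + j)) sums (\<Sum>i=1..j. e i)"
proof (induction j)
  case (Suc j)
  have "(\<lambda>n. e (n + Suc j) - e (Suc n + Suc j)) sums e (Suc j)"
    using telescope_sums'[OF LIMSEQ_ignore_initial_segment[OF assms, of "Suc j"]] by simp
  from sums_add[OF Suc this] show ?case by (simp add: algebra_simps)
qed simp

lemma sums_shift_weight_telescope:
  fixes f :: "real \<Rightarrow> real"
  assumes increment: "\<And>i. i \<in> {1..j} \<Longrightarrow>
      (\<lambda>n. (f (real (Suc n) + (\<beta> + real i)) - f (real n + (\<beta> + real i))) / real (Suc n)) sums D i"
    and lim: "(\<lambda>n. f (real n + \<beta>) / real n) \<longlonglongrightarrow> 0"
  shows "(\<lambda>n. f (real (Suc n) + (\<beta> + real j)) * (1 / real (Suc n) - 1 / (real (Suc n) + real j)))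
           sums (\<Sum>i=1..j. D i + f (\<beta> + real i) / real i)"
proof -
  define e where "e m = f (real m + \<beta>) / real m" for m
  have "(\<lambda>n. (\<Sum>i=1..j. (f (real (Suc n) + (\<beta> + real i)) - f (real n + (\<beta> + real i))) / real (Suc n))
            + (e (Suc n) - e (Suc n + j))) sums ((\<Sum>i=1..j. D i) + (\<Sum>i=1..j. e i))"
    using lim increment by (intro sums_add sums_sum sums_diff_shift) (simp_all add: e_def)
  moreover have "(\<Sum>i=1..j. (f (real (Suc n) + (\<beta> + real i)) - f (real n + (\<beta> + real i))) / real (Suc n))
            + (e (Suc n) - e (Suc n + j))
        = f (real (Suc n) + (\<beta> + real j)) * (1 / real (Suc n) - 1 / (real (Suc n) + real j))" for n
  proof -
    define G where "G t = f (real (Suc n) + (\<beta> + t)) / real (Suc n)" for t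
    have "real (Suc n) + (\<beta> + (real i - 1)) = real n + (\<beta> + real i)" for i
      by simp
    hence "(\<Sum>i=1..j. (f (real (Suc n) + (\<beta> + real i)) - f (real n + (\<beta> + real i))) / real (Suc n))
        = (\<Sum>i=1..j. G (real i) - G (real i - 1))"
      by (simp add: G_def diff_divide_distrib)
    also have "\<dots> = G (real j) - G 0"
      by (rule sum_telescope_real)
    finally show ?thesis
      by (simp add: G_def e_def algebra_simps diff_divide_distrib)
  qed
  moreover have "(\<Sum>i=1..j. D i) + (\<Sum>i=1..j. e i) = (\<Sum>i=1..j. D i + f (\<beta> + real i) / real i)"
    by (simp add: sum.distrib e_def add.commute)
  ultimately show ?thesis by simp
qed

lemma sums_shift_weight_closed_form:
  fixes f F g :: "real \<Rightarrow> real"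
  assumes "\<alpha> > real j"
    and increment: "\<And>x. x > 1 \<Longrightarrow>
      (\<lambda>n. (f (real (Suc n) + x) - f (real n + x)) / real (Suc n)) sums (F x - F (x - 1) - f x / x + g x)"
    and lim: "(\<lambda>n. f (real n + (\<alpha> - real j)) / real n) \<longlonglongrightarrow> 0"
  shows "(\<lambda>n. f (real (Suc n) + \<alpha>) * (1 / real (Suc n) - 1 / (real (Suc n) + real j))) sums
     (F \<alpha> - F (\<alpha> - real j)
      - (real j - \<alpha>) * (\<Sum>i=1..j. f (\<alpha> + real i - real j) / (real i * (\<alpha> + real i - real j)))
      + (\<Sum>i=1..j. g (\<alpha> + real i - real j)))"
proof -
  define \<beta> where "\<beta> = \<alpha> - real j"
  have \<beta>: "\<beta> > 0" "\<alpha> = \<beta> + real j" "\<alpha> + real i - real j = \<beta> + real i" for i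
    using assms(1) by (simp_all add: \<beta>_def)
  have "(\<lambda>n. f (real (Suc n) + (\<beta> + real j)) * (1 / real (Suc n) - 1 / (real (Suc n) + real j))) sums
      (\<Sum>i=1..j. (F (\<beta> + real i) - F (\<beta> + real i - 1) - f (\<beta> + real i) / (\<beta> + real i) + g (\<beta> + real i))
                 + f (\<beta> + real i) / real i)"
    using \<beta>(1) lim by (intro sums_shift_weight_telescope increment) (auto simp: \<beta>_def)
  also have "(\<Sum>i=1..j. (F (\<beta> + real i) - F (\<beta> + real i - 1) - f (\<beta> + real i) / (\<beta> + real i) + g (\<beta> + real i))
                 + f (\<beta> + real i) / real i)
      = (\<Sum>i=1..j. F (\<beta> + real i) - F (\<beta> + (real i - 1)))
        + \<beta> * (\<Sum>i=1..j. f (\<beta> + real i) / (real i * (\<beta> + real i))) + (\<Sum>i=1..j. g (\<beta> + real i))"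
  proof -
    have "f x / i - f x / x = (x - i) * (f x / (i * x))" if "i > 0" "x > 0" for i x :: real
      using that by (simp add: field_simps)
    hence "(\<Sum>i=1..j. (F (\<beta> + real i) - F (\<beta> + real i - 1) - f (\<beta> + real i) / (\<beta> + real i) + g (\<beta> + real i))
                 + f (\<beta> + real i) / real i)
        = (\<Sum>i=1..j. (F (\<beta> + real i) - F (\<beta> + (real i - 1)))
                     + \<beta> * (f (\<beta> + real i) / (real i * (\<beta> + real i))) + g (\<beta> + real i))"
      using \<beta>(1) by (intro sum.cong) (auto simp: add_diff_eq)
    thus ?thesis by (simp add: sum.distrib sum_distrib_left)
  qed
  also have "(\<Sum>i=1..j. F (\<beta> + real i) - F (\<beta> + (real i - 1))) = F \<alpha> - F (\<alpha> - real j)"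
    using sum_telescope_real[of "\<lambda>t. F (\<beta> + t)" j] by (simp add: \<beta>_def)
  finally show ?thesis by (simp add: \<beta>)
qed

lemma sums_Hs_shift_weight:
  assumes "\<alpha> > real j"
  shows "(\<lambda>n. Hs (real (Suc n) + \<alpha>) * (1 / real (Suc n) - 1 / (real (Suc n) + real j))) sums
     (Hs \<alpha> ^ 2 + Hsm 2 \<alpha> - Hs (\<alpha> - real j) ^ 2 - Hsm 2 (\<alpha> - real j)
      - (real j - \<alpha>) * (\<Sum>i=1..j. Hs (\<alpha> + real i - real j) / (real i * (\<alpha> + real i - real j))))"
proof -
  have "(\<lambda>n. (Hs (real (Suc n) + x) - Hs (real n + x)) / real (Suc n)) sums
          ((Hs x ^ 2 + Hsm 2 x) - (Hs (x - 1) ^ 2 + Hsm 2 (x - 1)) - Hs x / x + 0)" if "x > 1" for x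
  proof -
    have increment_sum: "(Hs x ^ 2 + Hsm 2 x) - (Hs (x - 1) ^ 2 + Hsm 2 (x - 1)) - Hs x / x + 0 = Hs x / x"
      using that by (simp add: Hs_minus_one Hsm_minus_one power2_eq_square field_simps)
    show ?thesis unfolding increment_sum using that by (intro sums_Hs_increment) simp
  qed
  from sums_shift_weight_closed_form[OF assms this Hs_shift_over_tendsto_zero] assms
  show ?thesis by (simp add: diff_diff_eq)
qed

lemma sums_Hsm2_shift_weight:
  assumes "\<alpha> > real j"
  shows "(\<lambda>n. Hsm 2 (real (Suc n) + \<alpha>) * (1 / real (Suc n) - 1 / (real (Suc n) + real j))) sums
     (2 * Hsm 3 \<alpha> + Hs (\<alpha> - real j) * zeta_nat 2 + 2 * Hs \<alpha> * Hsm 2 \<alpha>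
      - 2 * Hsm 3 (\<alpha> - real j) - Hs \<alpha> * zeta_nat 2
      - 2 * Hs (\<alpha> - real j) * Hsm 2 (\<alpha> - real j)
      - (real j - \<alpha>) * (\<Sum>i=1..j. Hsm 2 (\<alpha> + real i - real j) / (real i * (\<alpha> + real i - real j)))
      - (\<Sum>i=1..j. Hs (\<alpha> + real i - real j) / (\<alpha> + real i - real j) ^ 2))"
proof -
  define F where "F x = 2 * Hsm 3 x - Hs x * zeta_nat 2 + 2 * Hs x * Hsm 2 x" for x
  have "(\<lambda>n. (Hsm 2 (real (Suc n) + x) - Hsm 2 (real n + x)) / real (Suc n)) sums
          (F x - F (x - 1) - Hsm 2 x / x + - (Hs x / x ^ 2))" if "x > 1" for x
  proof -
    have "Hs (x - 1) = Hs x - 1 / x" "Hsm 2 (x - 1) = Hsm 2 x - 1 / x ^ 2" "Hsm 3 (x - 1) = Hsm 3 x - 1 / x ^ 3"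
      using that by (simp_all add: Hs_minus_one Hsm_minus_one)
    hence increment_sum: "F x - F (x - 1) - Hsm 2 x / x + - (Hs x / x ^ 2) = Hs x / x ^ 2 - (zeta_nat 2 - Hsm 2 x) / x"
      using that unfolding F_def by (simp add: divide_simps power2_eq_square power3_eq_cube) algebra
    show ?thesis unfolding increment_sum using that by (intro sums_Hsm2_increment) simp
  qed
  from sums_shift_weight_closed_form[OF assms this Hsm_shift_over_tendsto_zero] assms
  show ?thesis by (simp add: F_def sum_negf algebra_simps)
qed

lemma sums_Hs_squared_shift_weight:
  assumes "\<alpha> > real j"
  shows "(\<lambda>n. Hs (real (Suc n) + \<alpha>) ^ 2 * (1 / real (Suc n) - 1 / (real (Suc n) + real j))) sums
     (Hs \<alpha> ^ 3 + Hs \<alpha> * Hsm 2 \<alpha> + Hs \<alpha> * zeta_nat 2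
      - Hs (\<alpha> - real j) ^ 3 - Hs (\<alpha> - real j) * Hsm 2 (\<alpha> - real j)
      - Hs (\<alpha> - real j) * zeta_nat 2
      + (\<Sum>i=1..j. Hs (\<alpha> + real i - real j) / (\<alpha> + real i - real j) ^ 2)
      - (real j - \<alpha>) * (\<Sum>i=1..j. Hs (\<alpha> + real i - real j) ^ 2 / (real i * (\<alpha> + real i - real j))))"
proof -
  define F where "F x = Hs x ^ 3 + Hs x * Hsm 2 x + Hs x * zeta_nat 2" for x
  have "(\<lambda>n. (Hs (real (Suc n) + x) ^ 2 - Hs (real n + x) ^ 2) / real (Suc n)) sums
          (F x - F (x - 1) - Hs x ^ 2 / x + Hs x / x ^ 2)" if "x > 1" for x
  proof -
    have "Hs (x - 1) = Hs x - 1 / x" "Hsm 2 (x - 1) = Hsm 2 x - 1 / x ^ 2"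
      using that by (simp_all add: Hs_minus_one Hsm_minus_one)
    hence increment_sum: "F x - F (x - 1) - Hs x ^ 2 / x + Hs x / x ^ 2
        = 2 * ((Hs x ^ 2 + Hsm 2 x) / x) - (Hs x / x ^ 2 - (zeta_nat 2 - Hsm 2 x) / x)"
      using that unfolding F_def by (simp add: divide_simps power2_eq_square power3_eq_cube) algebra
    show ?thesis unfolding increment_sum using that by (intro sums_Hs_squared_increment) simp
  qed
  from sums_shift_weight_closed_form[OF assms this Hs_squared_shift_over_tendsto_zero] assms
  show ?thesis by (simp add: F_def algebra_simps)
qed

theorem mainTheorem18:
  fixes k :: nat and \<alpha> :: real
  assumes "k \<ge> 1" and "\<alpha> > real k"
  shows
   "((\<lambda>n. Hs (real (Suc n) + \<alpha>) / (real (Suc n) * real ((Suc n + k) choose k))) sums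
      (\<Sum>j=1..k. (-1) ^ (j+1) * real (k choose j) *
        (Hs \<alpha> ^ 2 + Hsm 2 \<alpha> - Hs (\<alpha> - real j) ^ 2 - Hsm 2 (\<alpha> - real j)
         - (real j - \<alpha>) * (\<Sum>i=1..j. Hs (\<alpha> + real i - real j) / (real i * (\<alpha> + real i - real j))))))
    \<and>
    ((\<lambda>n. Hsm 2 (real (Suc n) + \<alpha>) / (real (Suc n) * real ((Suc n + k) choose k))) sums
      (\<Sum>j=1..k. (-1) ^ (j+1) * real (k choose j) *
        (2 * Hsm 3 \<alpha> + Hs (\<alpha> - real j) * zeta_nat 2 + 2 * Hs \<alpha> * Hsm 2 \<alpha>
         - 2 * Hsm 3 (\<alpha> - real j) - Hs \<alpha> * zeta_nat 2
         - 2 * Hs (\<alpha> - real j) * Hsm 2 (\<alpha> - real j)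
         - (real j - \<alpha>) * (\<Sum>i=1..j. Hsm 2 (\<alpha> + real i - real j) / (real i * (\<alpha> + real i - real j)))
         - (\<Sum>i=1..j. Hs (\<alpha> + real i - real j) / (\<alpha> + real i - real j) ^ 2))))
    \<and>
    ((\<lambda>n. Hs (real (Suc n) + \<alpha>) ^ 2 / (real (Suc n) * real ((Suc n + k) choose k))) sums
      (\<Sum>j=1..k. (-1) ^ (j+1) * real (k choose j) *
        (Hs \<alpha> ^ 3 + Hs \<alpha> * Hsm 2 \<alpha> + Hs \<alpha> * zeta_nat 2
         - Hs (\<alpha> - real j) ^ 3 - Hs (\<alpha> - real j) * Hsm 2 (\<alpha> - real j)
         - Hs (\<alpha> - real j) * zeta_nat 2
         + (\<Sum>i=1..j. Hs (\<alpha> + real i - real j) / (\<alpha> + real i - real j) ^ 2)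
         - (real j - \<alpha>) * (\<Sum>i=1..j. Hs (\<alpha> + real i - real j) ^ 2 / (real i * (\<alpha> + real i - real j))))))"
proof -
  have "\<alpha> > real j" if "j \<in> {1..k}" for j
    using that assms by auto
  thus ?thesis
    by (intro conjI sums_over_binomial[OF assms(1)]
        sums_Hs_shift_weight sums_Hsm2_shift_weight sums_Hs_squared_shift_weight)
qed

end
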